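(* Consider the hybrid size-control closed loop (context) and assume $x(t)\in\mathcal M_n$ for all $t\ge0$. Let $\beta=\sqrt{2(1-\cos(2\pi/n))}$, $\gamma_m=\sin(m\pi/n)/\sin(\pi/n)$ (so that $\|x_{i+m}-x_i\|=\gamma_m\|x_{i+1}-x_i\|$ for $x\in\mathcal M_n$), $\Gamma=\sum_{m=1}^N k_m\gamma_m$ and $C=2\beta\Gamma$. Then $p_1(t)=\dots=p_n(t)=\bar p(t)$, on each interval $[\ell\tau,(\ell+1)\tau)$ one has $\dot p_i=C\sin(\alpha_s)(p_i-1)$ with $\alpha_s=\alpha_{s_0}f_s(p_i((\ell-1)\tau))$ constant, and consequently, writing $p_{i_\ell}:=p_i(\ell\tau)$, $$p_{i_{\ell+1}}=(p_{i_\ell}-1)\,e^{C\sin(\alpha_{s_0}f_s(p_{i_{\ell-1}}))\tau}+1 .$$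
   Context: $n\ge3$ robots, $x=(x_1^T,\dots,x_n^T)^T$, indices mod $n$; $e_z=(0,0,1)^T$; $R_\theta$ is counterclockwise rotation by $\theta$ about $e_z$; $L_m$ is the $n\times n$ circulant matrix with first row having $1$ in position 1, $-1$ in position $m+1$, zeros elsewhere. $\mathcal M_n$ is the set of $x$ with $x_{i+1}-x_i=R_{2\pi/n}(x_{i+2}-x_{i+1})$ ($i=1,\dots,n-2$) and $e_z^T(x_n-x_{n-1})=e_z^T(x_1-x_n)$. Size control: $\rho>0$; $p_i(x)=1-\|x_{i+1}-x_i\|/\rho$; $\bar p=\frac1n\sum_ip_i$; $f_s$ continuous odd, $pf_s(p)>0$ for $p\neq0$, $|f_s|\le1$, $f_s'(0)>a>0$; $\alpha_{s_0}>0$, $\tau>0$, $0<N<n-1$, $k_m>0$. Closed loop: $\dot x=-\sum_{m=1}^Nk_m(L_m\otimes R_{\alpha_m}+L_m^T\otimes R_{\alpha_m}^T)x$ on $[\ell\tau,(\ell+1)\tau)$, $\ell=0,1,\dots$, with $\alpha_m=m\pi/n+\alpha_{s_0}f_s(\bar p(x((\ell-1)\tau)))$ (for $\ell=0$ use $x(0)$). *)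

theory Defs
  imports "HOL-Analysis.Analysis"
begin

text \<open>Robots are indexed 0..n-1 (paper: 1..n); positions in R^3 = real^3.
  A configuration is y :: nat => real^3, only indices < n matter; indices are taken mod n.\<close>

definition rot :: "real \<Rightarrow> real^3^3" where
  "rot \<theta> = (\<chi> i j.
     if i = 1 \<and> j = 1 then cos \<theta> else if i = 1 \<and> j = 2 then - sin \<theta>
     else if i = 2 \<and> j = 1 then sin \<theta> else if i = 2 \<and> j = 2 then cos \<theta>
     else if i = 3 \<and> j = 3 then 1 else 0)"

definition ez_comp :: "real^3 \<Rightarrow> real" where
  "ez_comp v = v $ 3"

text \<open>The n x n circulant matrix L_m (0-indexed entries i,j < n): entry (i,j) equals c((j-i) mod n)
  where the first row c has 1 in position 0 and -1 in position m.\<close>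
definition Lc :: "nat \<Rightarrow> nat \<Rightarrow> nat \<Rightarrow> nat \<Rightarrow> real" where
  "Lc n m i j = (if (j + n - i) mod n = 0 then 1 else if (j + n - i) mod n = m then -1 else 0)"

text \<open>Component i of ((L \<otimes> A) + (L^T \<otimes> A^T)) y, summed with gains, negated: closed-loop vector field.\<close>
definition rhs :: "nat \<Rightarrow> nat \<Rightarrow> (nat \<Rightarrow> real) \<Rightarrow> (nat \<Rightarrow> real) \<Rightarrow> (nat \<Rightarrow> real^3) \<Rightarrow> nat \<Rightarrow> real^3" where
  "rhs n N k \<alpha> y i = - (\<Sum>m\<in>{1..N}. k m *\<^sub>R
      (\<Sum>j<n. Lc n m i j *\<^sub>R (rot (\<alpha> m) *v y j)
             + Lc n m j i *\<^sub>R (transpose (rot (\<alpha> m)) *v y j)))"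

definition inMn :: "nat \<Rightarrow> (nat \<Rightarrow> real^3) \<Rightarrow> bool" where
  "inMn n y \<longleftrightarrow>
     (\<forall>i. i + 2 < n \<longrightarrow> y (i+1) - y i = rot (2*pi/n) *v (y (i+2) - y (i+1))) \<and>
     ez_comp (y (n-1) - y (n-2)) = ez_comp (y 0 - y (n-1))"

definition pfun :: "real \<Rightarrow> nat \<Rightarrow> (nat \<Rightarrow> real^3) \<Rightarrow> nat \<Rightarrow> real" where
  "pfun \<rho> n y i = 1 - norm (y ((i+1) mod n) - y i) / \<rho>"

definition pbar :: "real \<Rightarrow> nat \<Rightarrow> (nat \<Rightarrow> real^3) \<Rightarrow> real" where
  "pbar \<rho> n y = (\<Sum>i<n. pfun \<rho> n y i) / real n"

definition samp :: "real \<Rightarrow> nat \<Rightarrow> real" where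
  "samp \<tau> l = (if l = 0 then 0 else (real l - 1) * \<tau>)"

definition alphas :: "nat \<Rightarrow> real \<Rightarrow> (real \<Rightarrow> real) \<Rightarrow> real \<Rightarrow> (nat \<Rightarrow> real^3) \<Rightarrow> nat \<Rightarrow> real" where
  "alphas n as0 fs \<rho> y m = real m * pi / real n + as0 * fs (pbar \<rho> n y)"

definition beta :: "nat \<Rightarrow> real" where
  "beta n = sqrt (2 * (1 - cos (2*pi/real n)))"

definition gam :: "nat \<Rightarrow> nat \<Rightarrow> real" where
  "gam n m = sin (real m * pi / real n) / sin (pi / real n)"

definition Gam :: "nat \<Rightarrow> nat \<Rightarrow> (nat \<Rightarrow> real) \<Rightarrow> real" where
  "Gam n N k = (\<Sum>m\<in>{1..N}. k m * gam n m)"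

definition Cconst :: "nat \<Rightarrow> nat \<Rightarrow> (nat \<Rightarrow> real) \<Rightarrow> real" where
  "Cconst n N k = 2 * beta n * Gam n N k"

end

theory Submission
  imports Defs
begin

(* Identify the horizontal plane with the complex numbers. A configuration in M_n is then a
   regular n-gon at constant height, with vertices c + w \<omega>^j for \<omega> = exp(-2\<pi>i/n). The closed-loop
   field is circulant, so it maps this Fourier mode to a multiple of itself, and for
   \<alpha>_m = m\<pi>/n + s the multiplier is the real number C sin s. Hence on each sampling interval
   every edge vector solves d' = C sin(\<alpha>_s) d, all edges keep a common length, and that length
   scales by exp(C sin(\<alpha>_s) t). *)

definition planar :: "real^3 \<Rightarrow> complex" where
  "planar v = Complex (v$1) (v$2)"

lemma bounded_linear_planar: "bounded_linear planar"
proof -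
  have "planar = (\<lambda>v. of_real (v$1) + \<i> * of_real (v$2))"
    by (auto simp: planar_def fun_eq_iff complex_eq_iff)
  moreover have "bounded_linear (\<lambda>v::real^3. of_real (v$1) + \<i> * (of_real (v$2) :: complex))"
    by (intro bounded_linear_add bounded_linear_compose[OF bounded_linear_mult_right]
        bounded_linear_compose[OF bounded_linear_of_real] bounded_linear_vec_nth)
  ultimately show ?thesis by simp
qed

lemmas linear_planar = bounded_linear.linear[OF bounded_linear_planar]

lemmas planar_add = linear_add[OF linear_planar]
  and planar_diff = linear_diff[OF linear_planar]
  and planar_minus = linear_neg[OF linear_planar]
  and planar_scaleR = linear_scale[OF linear_planar]
  and planar_sum = linear_sum[OF linear_planar]

lemma planar_rot: "planar (rot \<theta> *v v) = cis \<theta> * planar v"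
  by (simp add: planar_def rot_def matrix_vector_mult_def sum_3 complex_eq_iff algebra_simps)

lemma planar_rot_transpose: "planar (transpose (rot \<theta>) *v v) = cis (- \<theta>) * planar v"
  by (simp add: planar_def rot_def transpose_def matrix_vector_mult_def sum_3 complex_eq_iff
      algebra_simps)

lemma rot_nth_3: "(rot \<theta> *v v) $ 3 = v $ 3"
  by (simp add: rot_def matrix_vector_mult_def sum_3)

lemma norm_eq_cmod_planar: "v $ 3 = 0 \<Longrightarrow> norm v = cmod (planar v)"
  by (simp add: planar_def norm_vec_def L2_set_def sum_3 cmod_def)

definition \<omega> :: "nat \<Rightarrow> complex" where
  "\<omega> n = cis (- 2 * pi / real n)"

lemma omega_pow: "\<omega> n ^ m = cis (- 2 * pi * real m / real n)"
  unfolding \<omega>_def Complex.DeMoivre by (rule arg_cong[where f = cis]) simp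

lemma omega_pow_self: "n > 0 \<Longrightarrow> \<omega> n ^ n = 1"
  by (simp add: omega_pow complex_eq_iff)

lemma omega_pow_mod: "n > 0 \<Longrightarrow> \<omega> n ^ (j mod n) = \<omega> n ^ j"
proof -
  assume n: "n > 0"
  have "\<omega> n ^ j = \<omega> n ^ (j mod n) * (\<omega> n ^ n) ^ (j div n)"
    by (metis mod_div_mult_eq power_add power_mult mult.commute)
  then show ?thesis using n by (simp add: omega_pow_self)
qed

lemma omega_pow_diff:
  assumes "m \<le> n" "n > 0"
  shows "\<omega> n ^ (n - m) = cis (2 * pi * real m / real n)"
proof -
  have "\<omega> n ^ m * \<omega> n ^ (n - m) = 1"
    using assms by (simp add: power_add[symmetric] omega_pow_self)
  then have "\<omega> n ^ (n - m) = inverse (\<omega> n ^ m)"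
    by (simp add: inverse_unique)
  then show ?thesis by (simp add: omega_pow)
qed

lemma omega_neq_1: "n \<ge> 3 \<Longrightarrow> \<omega> n \<noteq> 1"
proof
  assume n: "n \<ge> 3" and "\<omega> n = 1"
  then have "sin (2 * pi / real n) = 0" by (simp add: \<omega>_def complex_eq_iff)
  moreover have "sin (2 * pi / real n) > 0"
    using n by (intro sin_gt_zero) (auto simp: field_simps)
  ultimately show False by simp
qed

lemma norm_omega [simp]: "cmod (\<omega> n) = 1"
  by (simp add: \<omega>_def)

lemma cis_shift_identity:
  "cis (a + s) * (1 - cis (- 2 * a)) + cis (- (a + s)) * (1 - cis (2 * a))
     = of_real (- 4 * sin s * sin a)"
proof -
  have "cis (a + s) * (1 - cis (- 2 * a)) + cis (- (a + s)) * (1 - cis (2 * a))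
      = cis (a + s) + cis (- (a + s)) - cis (s - a) - cis (- (s - a))"
    by (simp add: algebra_simps cis_mult)
  also have "\<dots> = of_real (- 4 * sin s * sin a)"
    by (simp add: complex_eq_iff cos_add cos_diff sin_add sin_diff)
  finally show ?thesis .
qed

lemma cyclic_offset_eq_iff:
  fixes i j d n :: nat
  assumes "i < n" "j < n" "d < n"
  shows "(j + n - i) mod n = d \<longleftrightarrow> j = (i + d) mod n"
  using assms by (cases "i \<le> j"; cases "i + d < n") (auto simp: mod_if)

lemma Lc_eq_of_bool:
  assumes "i < n" "j < n" "0 < m" "m < n"
  shows "Lc n m i j = of_bool (j = i) - of_bool (j = (i + m) mod n)"
    and "Lc n m j i = of_bool (j = i) - of_bool (j = (i + (n - m)) mod n)"
proof -
  have "(i + m) mod n \<noteq> i" "(i + (n - m)) mod n \<noteq> i"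
    using assms by (auto simp: mod_if)
  moreover have "i = (j + m) mod n \<longleftrightarrow> j = (i + (n - m)) mod n"
    using assms by (cases "i \<le> j"; cases "j + m < n") (auto simp: mod_if)
  ultimately show "Lc n m i j = of_bool (j = i) - of_bool (j = (i + m) mod n)"
    and "Lc n m j i = of_bool (j = i) - of_bool (j = (i + (n - m)) mod n)"
    using assms cyclic_offset_eq_iff[of i n j 0] cyclic_offset_eq_iff[of i n j m]
      cyclic_offset_eq_iff[of j n i 0] cyclic_offset_eq_iff[of j n i m]
    by (auto simp: Lc_def)
qed

lemma sum_indicator_diff_scaleR:
  fixes f :: "nat \<Rightarrow> 'a::real_vector"
  assumes "a < n" "b < n"
  shows "(\<Sum>j<n. (of_bool (j = a) - of_bool (j = b)) *\<^sub>R f j) = f a - f b"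
proof -
  have delta: "(\<Sum>j<n. of_bool (j = c) *\<^sub>R f j) = f c" if "c < n" for c
  proof -
    have "(\<Sum>j<n. of_bool (j = c) *\<^sub>R f j) = (\<Sum>j<n. if j = c then f j else 0)"
      by (rule sum.cong) auto
    then show ?thesis using that by simp
  qed
  show ?thesis
    using assms by (simp add: scaleR_diff_left sum_subtractf delta)
qed

lemma sum_Lc_row:
  fixes f :: "nat \<Rightarrow> 'a::real_vector"
  assumes "i < n" "0 < m" "m < n"
  shows "(\<Sum>j<n. Lc n m i j *\<^sub>R f j) = f i - f ((i + m) mod n)"
proof -
  have "(\<Sum>j<n. Lc n m i j *\<^sub>R f j)
      = (\<Sum>j<n. (of_bool (j = i) - of_bool (j = (i + m) mod n)) *\<^sub>R f j)"
    using assms by (intro sum.cong) (simp_all add: Lc_eq_of_bool(1))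
  then show ?thesis using assms by (simp add: sum_indicator_diff_scaleR)
qed

lemma sum_Lc_column:
  fixes f :: "nat \<Rightarrow> 'a::real_vector"
  assumes "i < n" "0 < m" "m < n"
  shows "(\<Sum>j<n. Lc n m j i *\<^sub>R f j) = f i - f ((i + (n - m)) mod n)"
proof -
  have "(\<Sum>j<n. Lc n m j i *\<^sub>R f j)
      = (\<Sum>j<n. (of_bool (j = i) - of_bool (j = (i + (n - m)) mod n)) *\<^sub>R f j)"
    using assms by (intro sum.cong) (simp_all add: Lc_eq_of_bool(2))
  then show ?thesis using assms by (simp only: sum_indicator_diff_scaleR mod_less_divisor)
qed

lemma inMn_edge_step:
  assumes "inMn n y" "j + 2 < n"
  shows "planar (y (j + 2)) - planar (y (j + 1)) = \<omega> n * (planar (y (j + 1)) - planar (y j))"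
    and "y (j + 2) $ 3 - y (j + 1) $ 3 = y (j + 1) $ 3 - y j $ 3"
proof -
  have h: "y (j + 1) - y j = rot (2 * pi / n) *v (y (j + 2) - y (j + 1))"
    using assms by (auto simp: inMn_def)
  have "planar (y (j + 1)) - planar (y j) = cis (2 * pi / n) * (planar (y (j + 2)) - planar (y (j + 1)))"
    using arg_cong[OF h, of planar] by (simp add: planar_diff planar_rot)
  then show "planar (y (j + 2)) - planar (y (j + 1)) = \<omega> n * (planar (y (j + 1)) - planar (y j))"
    by (simp add: \<omega>_def cis_mult)
  show "y (j + 2) $ 3 - y (j + 1) $ 3 = y (j + 1) $ 3 - y j $ 3"
    using arg_cong[OF h, of "\<lambda>v. v $ 3"] by (simp add: rot_nth_3)
qed

lemma inMn_edges:
  assumes "inMn n y" "j \<le> n - 2"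
  shows "planar (y (Suc j)) - planar (y j) = \<omega> n ^ j * (planar (y 1) - planar (y 0))
    \<and> y (Suc j) $ 3 - y j $ 3 = y 1 $ 3 - y 0 $ 3"
  using assms(2)
proof (induction j)
  case (Suc j)
  then have "j + 2 < n" by linarith
  with Suc inMn_edge_step[OF assms(1) this] show ?case by (simp add: numeral_2_eq_2)
qed simp

lemma inMn_constant_height:
  assumes n: "n \<ge> 3" and M: "inMn n y" and j: "j < n"
  shows "y j $ 3 = y 0 $ 3"
proof -
  \<comment> \<open>All height increments equal e; closing the cycle forces n e = 0.\<close>
  define e where "e = y 1 $ 3 - y 0 $ 3"
  have step: "y (Suc j) $ 3 - y j $ 3 = e" if "j \<le> n - 2" for j
    using inMn_edges[OF M that] unfolding e_def by blast
  have height: "y j $ 3 = y 0 $ 3 + real j * e" if "j \<le> n - 1" for j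
    using that
  proof (induction j)
    case (Suc j)
    then have "j \<le> n - 2" by linarith
    with Suc step[of j] show ?case by (simp add: algebra_simps)
  qed simp
  have "Suc (n - 2) = n - 1" using n by simp
  then have "y (n - 1) $ 3 - y (n - 2) $ 3 = e"
    using step[of "n - 2"] by simp
  moreover have "ez_comp (y (n - 1) - y (n - 2)) = ez_comp (y 0 - y (n - 1))"
    using M by (simp add: inMn_def)
  ultimately have "real n * e = 0"
    using height[of "n - 1"] n by (simp add: ez_comp_def of_nat_diff algebra_simps)
  then have "e = 0" using n by simp
  then show ?thesis using height[of j] j by simp
qed

lemma inMn_planar_vertices:
  assumes n: "n \<ge> 3" and M: "inMn n y"
  obtains c w where "\<And>j. j < n \<Longrightarrow> planar (y j) = c + w * \<omega> n ^ j"
proof -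
  define w where "w = (planar (y 1) - planar (y 0)) / (\<omega> n - 1)"
  define c where "c = planar (y 0) - w"
  have "planar (y j) = c + w * \<omega> n ^ j" if "j \<le> n - 1" for j
    using that
  proof (induction j)
    case (Suc j)
    then have "j \<le> n - 2" by linarith
    then have "planar (y (Suc j)) - planar (y j) = \<omega> n ^ j * (planar (y 1) - planar (y 0))"
      using inMn_edges[OF M] by blast
    also have "\<dots> = \<omega> n ^ j * (w * (\<omega> n - 1))"
      using omega_neq_1[OF n] by (simp add: w_def)
    finally show ?case using Suc by (simp add: algebra_simps)
  qed (simp add: c_def)
  then show ?thesis using that by force
qed

definition regular_polygon :: "nat \<Rightarrow> complex \<Rightarrow> complex \<Rightarrow> (nat \<Rightarrow> real^3) \<Rightarrow> bool" where
  "regular_polygon n c w y \<longleftrightarrow> (\<forall>j<n. planar (y j) = c + w * \<omega> n ^ j \<and> y j $ 3 = y 0 $ 3)"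

lemma regular_polygonD:
  assumes "regular_polygon n c w y" "j < n"
  shows "planar (y j) = c + w * \<omega> n ^ j" and "y j $ 3 = y 0 $ 3"
  using assms unfolding regular_polygon_def by blast+

lemma inMn_imp_regular_polygon:
  assumes "n \<ge> 3" "inMn n y"
  obtains c w where "regular_polygon n c w y"
  using inMn_planar_vertices[OF assms] inMn_constant_height[OF assms]
  unfolding regular_polygon_def by metis

lemma regular_polygon_planar_mod:
  assumes "regular_polygon n c w y" "n > 0"
  shows "planar (y (j mod n)) = c + w * \<omega> n ^ j"
  using regular_polygonD(1)[OF assms(1), of "j mod n"] assms(2) by (simp add: omega_pow_mod)

lemma regular_polygon_edge:
  assumes "regular_polygon n c w y" "i < n"
  shows "planar (y ((i + 1) mod n)) - planar (y i) = w * \<omega> n ^ i * (\<omega> n - 1)"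
proof -
  have "planar (y ((i + 1) mod n)) - planar (y i) = w * \<omega> n ^ (i + 1) - w * \<omega> n ^ i"
    using regular_polygon_planar_mod[OF assms(1), of "i + 1"] regular_polygonD(1)[OF assms] assms(2)
    by simp
  then show ?thesis by (simp add: algebra_simps)
qed

lemma regular_polygon_edge_norm:
  assumes "regular_polygon n c w y" "i < n"
  shows "norm (y ((i + 1) mod n) - y i) = cmod (planar (y ((i + 1) mod n)) - planar (y i))"
proof -
  have "y ((i + 1) mod n) $ 3 = y i $ 3"
    using regular_polygonD(2)[OF assms(1)] assms(2) by (metis mod_less_divisor zero_less_iff_neq_zero not_less0)
  then show ?thesis by (simp add: norm_eq_cmod_planar planar_diff)
qed

lemma regular_polygon_pfun:
  assumes "regular_polygon n c w y" "i < n"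
  shows "pfun \<rho> n y i = 1 - cmod w * cmod (\<omega> n - 1) / \<rho>"
  using regular_polygon_edge_norm[OF assms] regular_polygon_edge[OF assms]
  by (simp add: pfun_def norm_mult norm_power)

lemma regular_polygon_pfun_eq_pbar:
  assumes "regular_polygon n c w y" "i < n"
  shows "pfun \<rho> n y i = pbar \<rho> n y"
proof -
  have "pbar \<rho> n y = (\<Sum>j<n. 1 - cmod w * cmod (\<omega> n - 1) / \<rho>) / real n"
    unfolding pbar_def using regular_polygon_pfun[OF assms(1)] by simp
  then show ?thesis using assms(2) regular_polygon_pfun[OF assms] by simp
qed

(* Row i of L_m picks x_i - x_{i+m} and row i of L_m^T picks x_i - x_{i-m}, so the closed-loop
   matrix acts on the mode j \<mapsto> \<omega>^j by multiplication with this number. *)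
definition mode_eigenvalue :: "nat \<Rightarrow> nat \<Rightarrow> (nat \<Rightarrow> real) \<Rightarrow> (nat \<Rightarrow> real) \<Rightarrow> complex" where
  "mode_eigenvalue n N k \<alpha> =
     - (\<Sum>m\<in>{1..N}. of_real (k m) * (cis (\<alpha> m) * (1 - \<omega> n ^ m) + cis (- \<alpha> m) * (1 - \<omega> n ^ (n - m))))"

lemma planar_rhs_mode:
  assumes N: "N < n" and i: "i < n" and y: "\<And>j. j < n \<Longrightarrow> planar (y j) = c + w * \<omega> n ^ j"
  shows "planar (rhs n N k \<alpha> y i) = w * \<omega> n ^ i * mode_eigenvalue n N k \<alpha>"
proof -
  have y_mod: "planar (y (j mod n)) = c + w * \<omega> n ^ j" for j
    using y[of "j mod n"] i by (simp add: omega_pow_mod)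
  have summand: "(\<Sum>j<n. Lc n m i j *\<^sub>R planar (rot (\<alpha> m) *v y j)
                       + Lc n m j i *\<^sub>R planar (transpose (rot (\<alpha> m)) *v y j))
      = w * \<omega> n ^ i * (cis (\<alpha> m) * (1 - \<omega> n ^ m) + cis (- \<alpha> m) * (1 - \<omega> n ^ (n - m)))"
    if m: "m \<in> {1..N}" for m
  proof -
    have m': "0 < m" "m < n" using m N by auto
    have "(\<Sum>j<n. Lc n m i j *\<^sub>R planar (rot (\<alpha> m) *v y j)
                       + Lc n m j i *\<^sub>R planar (transpose (rot (\<alpha> m)) *v y j))
        = cis (\<alpha> m) * (planar (y i) - planar (y ((i + m) mod n)))
          + cis (- \<alpha> m) * (planar (y i) - planar (y ((i + (n - m)) mod n)))"
      unfolding sum.distrib sum_Lc_row[OF i m'] sum_Lc_column[OF i m'] planar_rot planar_rot_transpose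
      by (simp add: algebra_simps)
    also have "\<dots> = cis (\<alpha> m) * (w * \<omega> n ^ i - w * \<omega> n ^ (i + m))
                   + cis (- \<alpha> m) * (w * \<omega> n ^ i - w * \<omega> n ^ (i + (n - m)))"
      using y_mod y[OF i] by simp
    finally show ?thesis by (simp add: power_add algebra_simps)
  qed
  have "planar (rhs n N k \<alpha> y i) = - (\<Sum>m\<in>{1..N}. of_real (k m) *
          (w * \<omega> n ^ i * (cis (\<alpha> m) * (1 - \<omega> n ^ m) + cis (- \<alpha> m) * (1 - \<omega> n ^ (n - m)))))"
    unfolding rhs_def planar_minus planar_sum planar_scaleR planar_add
    by (intro arg_cong[where f = uminus] sum.cong refl) (simp only: summand, simp add: scaleR_conv_of_real)
  also have "\<dots> = w * \<omega> n ^ i * mode_eigenvalue n N k \<alpha>"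
    by (simp add: mode_eigenvalue_def sum_distrib_left algebra_simps)
  finally show ?thesis .
qed

lemma sin_pi_div_pos: "n \<ge> 2 \<Longrightarrow> sin (pi / real n) > 0"
  by (intro sin_gt_zero) (auto simp: field_simps)

lemma beta_eq: "n \<ge> 2 \<Longrightarrow> beta n = 2 * sin (pi / real n)"
proof -
  assume n: "n \<ge> 2"
  have "2 * (1 - cos (2 * pi / real n)) = (2 * sin (pi / real n))\<^sup>2"
    using cos_double_sin[of "pi / real n"] by (simp add: power2_eq_square)
  then show ?thesis
    unfolding beta_def using sin_pi_div_pos[OF n] by (intro real_sqrt_unique) simp_all
qed

lemma Cconst_eq: "n \<ge> 2 \<Longrightarrow> Cconst n N k = 4 * (\<Sum>m\<in>{1..N}. k m * sin (real m * pi / real n))"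
  using sin_pi_div_pos[of n]
  by (simp add: Cconst_def beta_eq Gam_def gam_def sum_distrib_left mult_ac)

lemma mode_eigenvalue_shifted:
  assumes n: "n \<ge> 2" and N: "N < n"
  shows "mode_eigenvalue n N k (\<lambda>m. real m * pi / real n + s) = of_real (Cconst n N k * sin s)"
proof -
  have "cis (real m * pi / real n + s) * (1 - \<omega> n ^ m)
          + cis (- (real m * pi / real n + s)) * (1 - \<omega> n ^ (n - m))
        = of_real (- 4 * sin s * sin (real m * pi / real n))" if "m \<in> {1..N}" for m
  proof -
    have "\<omega> n ^ m = cis (- 2 * (real m * pi / real n))"
      by (simp add: omega_pow mult_ac)
    moreover have "\<omega> n ^ (n - m) = cis (2 * (real m * pi / real n))"
      using that n N by (subst omega_pow_diff) (simp_all add: mult_ac)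
    ultimately show ?thesis by (simp only: cis_shift_identity)
  qed
  then have "mode_eigenvalue n N k (\<lambda>m. real m * pi / real n + s)
      = - (\<Sum>m\<in>{1..N}. of_real (k m) * of_real (- 4 * sin s * sin (real m * pi / real n)))"
    unfolding mode_eigenvalue_def by (intro arg_cong[where f = uminus] sum.cong) simp_all
  then show ?thesis
    using n by (simp add: Cconst_eq sum_distrib_left sum_distrib_right sum_negf mult_ac)
qed

(* The equation is only assumed on the half-open interval; continuity extends the solution
   formula to the right endpoint, where the next sampling interval begins. *)
lemma linear_ode_exp_solution:
  fixes f :: "real \<Rightarrow> 'a::real_normed_vector"
  assumes ab: "a < b" and cont: "continuous_on {a..b} f"
    and deriv: "\<And>t. t \<in> {a..<b} \<Longrightarrow> (f has_vector_derivative c *\<^sub>R f t) (at t within {a..<b})"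
    and s: "s \<in> {a..b}"
  shows "f s = exp (c * (s - a)) *\<^sub>R f a"
proof -
  define g where "g t = exp (- c * (t - a)) *\<^sub>R f t" for t
  have "(g has_vector_derivative 0) (at t within {a..<b})" if t: "t \<in> {a..<b}" for t
  proof -
    have "(g has_vector_derivative exp (- c * (t - a)) *\<^sub>R (c *\<^sub>R f t)
            + (exp (- c * (t - a)) * - c) *\<^sub>R f t) (at t within {a..<b})"
      unfolding g_def by (rule has_vector_derivative_scaleR[OF _ deriv[OF t]])
        (auto intro!: derivative_eq_intros)
    then show ?thesis by (rule has_vector_derivative_eq_rhs) (simp add: algebra_simps)
  qed
  then obtain C where gC: "\<And>t. t \<in> {a..<b} \<Longrightarrow> g t = C"
    using has_vector_derivative_zero_constant[of "{a..<b}" g] by auto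
  have on_open: "f t - exp (c * (t - a)) *\<^sub>R f a = 0" if t: "t \<in> {a..<b}" for t
  proof -
    have "g t = f a"
      using gC[OF t] gC[of a] ab by (simp add: g_def)
    moreover have "f t = exp (c * (t - a)) *\<^sub>R g t"
      by (simp add: g_def exp_add[symmetric])
    ultimately show ?thesis by simp
  qed
  have cont_closure: "continuous_on (closure {a..<b}) (\<lambda>t. f t - exp (c * (t - a)) *\<^sub>R f a)"
    using ab cont by (auto intro!: continuous_intros)
  have "s \<in> closure {a..<b}"
    using ab s by simp
  from continuous_constant_on_closure[OF cont_closure on_open this]
  show ?thesis by (simp only: right_minus_eq)
qed

locale hybrid_size_control =
  fixes n N :: nat and k :: "nat \<Rightarrow> real" and \<rho> as0 \<tau> :: real
    and fs :: "real \<Rightarrow> real" and x :: "real \<Rightarrow> nat \<Rightarrow> real^3"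
  assumes n3: "n \<ge> 3" and rho: "\<rho> > 0" and tau: "\<tau> > 0" and N_less: "N < n"
    and x_cont: "\<And>i. i < n \<Longrightarrow> continuous_on {0..} (\<lambda>t. x t i)"
    and x_ode: "\<And>(l::nat) t i. real l * \<tau> \<le> t \<Longrightarrow> t < (real l + 1) * \<tau> \<Longrightarrow> i < n \<Longrightarrow>
        ((\<lambda>s. x s i) has_vector_derivative rhs n N k (alphas n as0 fs \<rho> (x (samp \<tau> l))) (x t) i)
        (at t within {real l * \<tau> ..< (real l + 1) * \<tau>})"
    and x_Mn: "\<And>t. t \<ge> 0 \<Longrightarrow> inMn n (x t)"
begin

definition edge :: "nat \<Rightarrow> real \<Rightarrow> complex" where
  "edge i t = planar (x t ((i + 1) mod n)) - planar (x t i)"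

definition rate :: "nat \<Rightarrow> real" where
  "rate l = Cconst n N k * sin (as0 * fs (pbar \<rho> n (x (samp \<tau> l))))"

lemma pfun_eq_pbar: "t \<ge> 0 \<Longrightarrow> i < n \<Longrightarrow> pfun \<rho> n (x t) i = pbar \<rho> n (x t)"
  by (metis inMn_imp_regular_polygon[OF n3 x_Mn] regular_polygon_pfun_eq_pbar)

lemma rate_eq_pfun: "i < n \<Longrightarrow> rate l = Cconst n N k * sin (as0 * fs (pfun \<rho> n (x (samp \<tau> l)) i))"
  using tau by (simp add: rate_def pfun_eq_pbar samp_def)

lemma pfun_eq_edge: "t \<ge> 0 \<Longrightarrow> i < n \<Longrightarrow> pfun \<rho> n (x t) i = 1 - cmod (edge i t) / \<rho>"
  by (metis inMn_imp_regular_polygon[OF n3 x_Mn] regular_polygon_edge_norm pfun_def edge_def)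

lemma edge_has_vector_derivative:
  assumes t: "real l * \<tau> \<le> t" "t < (real l + 1) * \<tau>" and i: "i < n"
  shows "(edge i has_vector_derivative rate l *\<^sub>R edge i t) (at t within {real l * \<tau> ..< (real l + 1) * \<tau>})"
proof -
  let ?\<alpha> = "alphas n as0 fs \<rho> (x (samp \<tau> l))"
  have i1: "(i + 1) mod n < n" using i by simp
  have "0 \<le> t" using t tau by (meson mult_nonneg_nonneg of_nat_0_le_iff order.trans less_imp_le)
  then obtain c w where P: "regular_polygon n c w (x t)"
    using inMn_imp_regular_polygon[OF n3 x_Mn] by blast
  have deriv: "(edge i has_vector_derivative
        planar (rhs n N k ?\<alpha> (x t) ((i + 1) mod n)) - planar (rhs n N k ?\<alpha> (x t) i))
      (at t within {real l * \<tau> ..< (real l + 1) * \<tau>})"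
    unfolding edge_def[abs_def]
    by (intro has_vector_derivative_diff bounded_linear.has_vector_derivative[OF bounded_linear_planar]
        x_ode t i i1)
  have "?\<alpha> = (\<lambda>m. real m * pi / real n + as0 * fs (pbar \<rho> n (x (samp \<tau> l))))"
    by (simp add: alphas_def fun_eq_iff)
  then have eig: "mode_eigenvalue n N k ?\<alpha> = of_real (rate l)"
    using mode_eigenvalue_shifted[of n N] n3 N_less by (simp add: rate_def)
  have "planar (rhs n N k ?\<alpha> (x t) ((i + 1) mod n)) - planar (rhs n N k ?\<alpha> (x t) i)
      = (w * \<omega> n ^ i * (\<omega> n - 1)) * of_real (rate l)"
    using planar_rhs_mode[OF N_less i1 regular_polygonD(1)[OF P]]
      planar_rhs_mode[OF N_less i regular_polygonD(1)[OF P]] i eig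
    by (simp add: omega_pow_mod algebra_simps)
  also have "\<dots> = rate l *\<^sub>R edge i t"
    using regular_polygon_edge[OF P i] by (simp add: edge_def scaleR_conv_of_real mult.commute)
  finally show ?thesis using deriv by simp
qed

lemma edge_exp:
  assumes i: "i < n" and s: "s \<in> {real l * \<tau> .. (real l + 1) * \<tau>}"
  shows "edge i s = exp (rate l * (s - real l * \<tau>)) *\<^sub>R edge i (real l * \<tau>)"
proof (rule linear_ode_exp_solution[OF _ _ edge_has_vector_derivative[OF _ _ i] s])
  show "real l * \<tau> < (real l + 1) * \<tau>" using tau by (simp add: algebra_simps)
  have "{real l * \<tau> .. (real l + 1) * \<tau>} \<subseteq> {0..}" using tau by auto
  then have "continuous_on {real l * \<tau> .. (real l + 1) * \<tau>} (\<lambda>t. planar (x t j))" if "j < n" for j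
    by (intro bounded_linear.continuous_on[OF bounded_linear_planar] continuous_on_subset[OF x_cont] that)
  then show "continuous_on {real l * \<tau> .. (real l + 1) * \<tau>} (edge i)"
    unfolding edge_def[abs_def] using i by (intro continuous_on_diff) auto
qed auto

lemma pfun_exp:
  assumes i: "i < n" and s: "s \<in> {real l * \<tau> .. (real l + 1) * \<tau>}"
  shows "pfun \<rho> n (x s) i = (pfun \<rho> n (x (real l * \<tau>)) i - 1) * exp (rate l * (s - real l * \<tau>)) + 1"
proof -
  have l0: "0 \<le> real l * \<tau>" using tau by simp
  then have "0 \<le> s" using s by auto
  then have "pfun \<rho> n (x s) i - 1 = - cmod (edge i s) / \<rho>"
    using pfun_eq_edge[OF _ i] by simp
  also have "\<dots> = exp (rate l * (s - real l * \<tau>)) * (- cmod (edge i (real l * \<tau>)) / \<rho>)"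
    using edge_exp[OF i s] by simp
  also have "\<dots> = exp (rate l * (s - real l * \<tau>)) * (pfun \<rho> n (x (real l * \<tau>)) i - 1)"
    using pfun_eq_edge[OF l0 i] by simp
  finally show ?thesis by (simp add: algebra_simps)
qed

lemma pfun_has_real_derivative:
  assumes t: "real l * \<tau> \<le> t" "t < (real l + 1) * \<tau>" and i: "i < n"
  shows "((\<lambda>s. pfun \<rho> n (x s) i) has_real_derivative rate l * (pfun \<rho> n (x t) i - 1))
    (at t within {real l * \<tau> ..< (real l + 1) * \<tau>})"
proof -
  let ?p0 = "pfun \<rho> n (x (real l * \<tau>)) i"
  have "((\<lambda>s. (?p0 - 1) * exp (rate l * (s - real l * \<tau>)) + 1) has_real_derivative
      rate l * ((?p0 - 1) * exp (rate l * (t - real l * \<tau>))))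
      (at t within {real l * \<tau> ..< (real l + 1) * \<tau>})"
    by (auto intro!: derivative_eq_intros)
  then have "((\<lambda>s. (?p0 - 1) * exp (rate l * (s - real l * \<tau>)) + 1) has_real_derivative
      rate l * (pfun \<rho> n (x t) i - 1)) (at t within {real l * \<tau> ..< (real l + 1) * \<tau>})"
    using pfun_exp[OF i, of t l] t by simp
  then show ?thesis
  proof (rule has_field_derivative_transform_within[where d = 1])
    show "(?p0 - 1) * exp (rate l * (s - real l * \<tau>)) + 1 = pfun \<rho> n (x s) i"
      if "s \<in> {real l * \<tau> ..< (real l + 1) * \<tau>}" for s
      using pfun_exp[OF i, of s l] that by simp
  qed (use t in auto)
qed

end

theorem mainTheorem10:
  fixes n N :: nat and k :: "nat \<Rightarrow> real" and \<rho> as0 \<tau> a :: real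
    and fs :: "real \<Rightarrow> real" and x :: "real \<Rightarrow> nat \<Rightarrow> real^3"
  assumes n3: "n \<ge> 3"
    and rho: "\<rho> > 0"
    and fs_cont: "continuous_on UNIV fs"
    and fs_odd: "\<And>p. fs (- p) = - fs p"
    and fs_sign: "\<And>p. p \<noteq> 0 \<Longrightarrow> p * fs p > 0"
    and fs_bnd: "\<And>p. \<bar>fs p\<bar> \<le> 1"
    and fs_der: "\<exists>D. (fs has_real_derivative D) (at 0) \<and> D > a" and a_pos: "a > 0"
    and as0: "as0 > 0" and tau: "\<tau> > 0"
    and N: "0 < N" "N < n - 1"
    and k: "\<And>m. 1 \<le> m \<Longrightarrow> m \<le> N \<Longrightarrow> k m > 0"
    and x_cont: "\<And>i. i < n \<Longrightarrow> continuous_on {0..} (\<lambda>t. x t i)"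
    and x_ode: "\<And>(l::nat) t i. real l * \<tau> \<le> t \<Longrightarrow> t < (real l + 1) * \<tau> \<Longrightarrow> i < n \<Longrightarrow>
        ((\<lambda>s. x s i) has_vector_derivative
           rhs n N k (alphas n as0 fs \<rho> (x (samp \<tau> l))) (x t) i)
        (at t within {real l * \<tau> ..< (real l + 1) * \<tau>})"
    and x_Mn: "\<And>t. t \<ge> 0 \<Longrightarrow> inMn n (x t)"
  shows "(\<forall>t\<ge>0. \<forall>i<n. pfun \<rho> n (x t) i = pbar \<rho> n (x t))
   \<and> (\<forall>(l::nat) t i. real l * \<tau> \<le> t \<longrightarrow> t < (real l + 1) * \<tau> \<longrightarrow> i < n \<longrightarrow>
        ((\<lambda>s. pfun \<rho> n (x s) i) has_real_derivative
           Cconst n N k * sin (as0 * fs (pfun \<rho> n (x (samp \<tau> l)) i)) * (pfun \<rho> n (x t) i - 1))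
        (at t within {real l * \<tau> ..< (real l + 1) * \<tau>}))
   \<and> (\<forall>(l::nat) i. i < n \<longrightarrow>
        pfun \<rho> n (x ((real l + 1) * \<tau>)) i
          = (pfun \<rho> n (x (real l * \<tau>)) i - 1)
              * exp (Cconst n N k * sin (as0 * fs (pfun \<rho> n (x (samp \<tau> l)) i)) * \<tau>) + 1)"
proof -
  \<comment> \<open>The hypotheses on fs, a, as0 and the gains k only matter for the convergence analysis.\<close>
  interpret hybrid_size_control n N k \<rho> as0 \<tau> fs x
    using n3 rho tau N x_cont x_ode x_Mn by unfold_locales auto
  have "pfun \<rho> n (x ((real l + 1) * \<tau>)) i
      = (pfun \<rho> n (x (real l * \<tau>)) i - 1) * exp (rate l * \<tau>) + 1" if "i < n" for l i
    using pfun_exp[OF that, of "(real l + 1) * \<tau>" l] tau by (simp add: algebra_simps)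
  then show ?thesis
    using pfun_eq_pbar pfun_has_real_derivative rate_eq_pfun by simp
qed

end
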